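(* Let $\theta\in[0,\infty]$, $\eta\in(0,1)$, gravity parameters $g_1,g_2,\ldots\ge0$, and a sequence of examples $(x_1,y_1),(x_2,y_2),\ldots$ with $x_i\in\mathbb{R}^d$, $y_i\in\mathbb{R}$. Suppose there is $C>0$ with $\|x_i\|\le C$ for all $i$, and $1-2C^2\eta\neq0$. Run the following algorithm: start with $v_1=0\in\mathbb{R}^d$; at trial $i=1,2,\ldots$, set $w_i=T_1(v_i,g_i\eta,\theta)$, predict $\hat y_i=w_i^Tx_i$, observe $y_i$, and set $v_{i+1}=w_i+2\eta(y_i-\hat y_i)x_i$. Then for every $T\ge1$ and every $\bar w\in\mathbb{R}^d$, \[ \frac{1-2C^2\eta}{T}\sum_{i=1}^T\left[(w_i^Tx_i-y_i)^2+\frac{g_i}{1-2C^2\eta}\|w_i\cdot I(|w_i|\le\theta)\|_1\right] \le \frac{\|\bar w\|^2}{2\eta T}+\frac1T\sum_{i=1}^T\Big[(\bar w^Tx_i-y_i)^2+g_{i+1}\|\bar w\cdot I(|w_{i+1}|\le\theta)\|_1\Big]. \]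
   Context: $\|\cdot\|$ is the Euclidean norm and $\|\cdot\|_1$ the $1$-norm. For $v\in\mathbb{R}^d$, $\alpha\ge0$, $\theta\in[0,\infty]$, $T_1(v,\alpha,\theta)$ is applied coordinatewise: $T_1(v_j,\alpha,\theta)=\max(0,v_j-\alpha)$ if $v_j\in[0,\theta]$, $=\min(0,v_j+\alpha)$ if $v_j\in[-\theta,0]$, and $=v_j$ otherwise. For $v,v'\in\mathbb{R}^d$, $\|v\cdot I(|v'|\le\theta)\|_1=\sum_{j=1}^d|v_j|\,I(|v'_j|\le\theta)$ with $I$ the indicator function. The vector $w_i$ is the weight vector used for prediction at trial $i$. *)

theory Defs
  imports "HOL-Analysis.Analysis"
begin

definition T1 :: "real \<Rightarrow> real \<Rightarrow> ereal \<Rightarrow> real" where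
  "T1 v \<alpha> \<theta> =
     (if 0 \<le> v \<and> ereal v \<le> \<theta> then max 0 (v - \<alpha>)
      else if v \<le> 0 \<and> ereal (- v) \<le> \<theta> then min 0 (v + \<alpha>)
      else v)"

definition T1_vec :: "real ^ 'd \<Rightarrow> real \<Rightarrow> ereal \<Rightarrow> real ^ 'd" where
  "T1_vec v \<alpha> \<theta> = (\<chi> j. T1 (v $ j) \<alpha> \<theta>)"

definition masked_l1 :: "real ^ 'd \<Rightarrow> real ^ 'd \<Rightarrow> ereal \<Rightarrow> real" where
  "masked_l1 v v' \<theta> = (\<Sum>j\<in>UNIV. \<bar>v $ j\<bar> * (if ereal \<bar>v' $ j\<bar> \<le> \<theta> then 1 else 0))"

end

theory Submission
  imports Defs
begin

text \<open>Track the potential \<open>\<parallel>wbar - w i\<parallel>\<^sup>2 + 2\<eta> g i \<parallel>w i \<cdot> I(|w i| \<le> \<theta>)\<parallel>\<^sub>1\<close>.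
  The gradient step from \<open>w i\<close> to \<open>v (i + 1)\<close> lowers the squared distance to any comparator
  \<open>wbar\<close> by \<open>2\<eta>(1 - 2C\<^sup>2\<eta>)\<close> times the learner's loss, up to \<open>2\<eta>\<close> times the comparator's loss.
  On the coordinates it touches, \<open>T\<^sub>1\<close> is soft thresholding, i.e. the proximal map of \<open>\<alpha>|\<cdot>|\<close>,
  so it trades squared distance against the masked 1-norm.  The resulting one-step
  inequality telescopes, and the potential starts at \<open>\<parallel>wbar\<parallel>\<^sup>2\<close> because \<open>w 1 = 0\<close>.\<close>

lemma soft_threshold_ineq:
  fixes a v u :: real
  assumes "0 \<le> a" "0 \<le> v"
  shows "(u - max 0 (v - a))^2 + 2*a*\<bar>max 0 (v - a)\<bar> \<le> (u - v)^2 + 2*a*\<bar>u\<bar>"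
proof (cases "a \<le> v")
  case True
  have "(u - max 0 (v - a))^2 + 2*a*\<bar>max 0 (v - a)\<bar> = (u - v)^2 + 2*a*u - a^2"
    using True by (simp add: power2_eq_square algebra_simps)
  also have "\<dots> \<le> (u - v)^2 + 2*a*\<bar>u\<bar>"
    using mult_left_mono[OF abs_ge_self, of a u] assms(1) zero_le_power2[of a] by linarith
  finally show ?thesis .
next
  case False
  have "(u - max 0 (v - a))^2 + 2*a*\<bar>max 0 (v - a)\<bar> = (u - v)^2 + 2 * v * u - v^2"
    using False by (simp add: power2_eq_square algebra_simps)
  also have "\<dots> \<le> (u - v)^2 + 2*a*\<bar>u\<bar>"
    using assms False mult_left_mono[OF abs_ge_self, of v u] mult_right_mono[of v a "\<bar>u\<bar>"]
      zero_le_power2[of v] by linarith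
  finally show ?thesis .
qed

lemma T1_prox_ineq:
  fixes u v a :: real and \<theta> :: ereal
  assumes a: "0 \<le> a"
  defines "m \<equiv> (if ereal \<bar>T1 v a \<theta>\<bar> \<le> \<theta> then 1 else 0)"
  shows "(u - T1 v a \<theta>)^2 + 2*a*(\<bar>T1 v a \<theta>\<bar> * m) \<le> (u - v)^2 + 2*a*(\<bar>u\<bar> * m)"
proof (cases "0 \<le> v \<and> ereal v \<le> \<theta>")
  case True
  then have T1: "T1 v a \<theta> = max 0 (v - a)" by (simp add: T1_def)
  with True a have "ereal \<bar>T1 v a \<theta>\<bar> \<le> \<theta>" by (auto intro: order_trans[of _ "ereal v"])
  then show ?thesis using soft_threshold_ineq[OF a, of v u] True by (simp add: m_def T1)
next
  case not_pos: False
  show ?thesis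
  proof (cases "v \<le> 0 \<and> ereal (- v) \<le> \<theta>")
    case True
    with not_pos have T1: "T1 v a \<theta> = - max 0 (- v - a)" by (auto simp: T1_def)
    with True a have "ereal \<bar>T1 v a \<theta>\<bar> \<le> \<theta>" by (auto intro: order_trans[of _ "ereal (- v)"])
    moreover have "(u - T1 v a \<theta>)^2 = (- u - max 0 (- v - a))^2"
      by (simp add: T1 power2_eq_square algebra_simps)
    ultimately show ?thesis using soft_threshold_ineq[OF a, of "- v" "- u"] True
      by (simp add: m_def T1 power2_commute)
  next
    case False
    with not_pos have "T1 v a \<theta> = v" "\<not> ereal \<bar>v\<bar> \<le> \<theta>"
      by (auto simp: T1_def abs_if)
    then show ?thesis by (simp add: m_def)
  qed
qed

lemma norm_vec_power2: "(norm (z :: real ^ 'd))^2 = (\<Sum>j\<in>UNIV. (z $ j)^2)"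
  by (simp only: power2_norm_eq_inner inner_vec_def) (simp add: power2_eq_square)

lemma T1_vec_prox_ineq:
  fixes u v :: "real ^ 'd"
  assumes "0 \<le> a"
  shows "(norm (u - T1_vec v a \<theta>))^2 + 2*a * masked_l1 (T1_vec v a \<theta>) (T1_vec v a \<theta>) \<theta>
     \<le> (norm (u - v))^2 + 2*a * masked_l1 u (T1_vec v a \<theta>) \<theta>"
  using sum_mono[of UNIV, OF T1_prox_ineq[OF assms, of "u $ j" "v $ j" \<theta> for j]]
  by (simp add: norm_vec_power2 masked_l1_def T1_vec_def sum.distrib sum_distrib_left)

lemma T1_vec_zero: "0 \<le> a \<Longrightarrow> T1_vec 0 a \<theta> = 0"
  by (simp add: T1_vec_def T1_def vec_eq_iff)

lemma masked_l1_nonneg: "0 \<le> masked_l1 u v \<theta>"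
  unfolding masked_l1_def by (rule sum_nonneg) auto

lemma masked_l1_zero [simp]: "masked_l1 0 v \<theta> = 0"
  by (simp add: masked_l1_def)

lemma lms_step_dist_ineq:
  fixes u w x :: "real ^ 'd"
  assumes "0 < \<eta>" and "norm x \<le> C"
  shows "(norm (u - (w + (2*\<eta>*(y - w \<bullet> x)) *\<^sub>R x)))^2
     \<le> (norm (u - w))^2 - 2*\<eta>*(1 - 2*C^2*\<eta>)*(w \<bullet> x - y)^2 + 2*\<eta>*(u \<bullet> x - y)^2"
proof -
  define p where "p = w \<bullet> x - y"
  define q where "q = u \<bullet> x - y"
  have "u - (w + (2*\<eta>*(y - w \<bullet> x)) *\<^sub>R x) = (u - w) + (2*\<eta>*p) *\<^sub>R x"
    by (simp add: p_def algebra_simps)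
  then have "(norm (u - (w + (2*\<eta>*(y - w \<bullet> x)) *\<^sub>R x)))^2
      = (norm (u - w))^2 + 2*(2*\<eta>*p)*((u - w) \<bullet> x) + (2*\<eta>*p)^2 * (norm x)^2"
    unfolding power2_norm_eq_inner
    by (simp add: inner_add_left inner_add_right inner_commute algebra_simps power2_eq_square)
  also have "\<dots> = (norm (u - w))^2 + 4*\<eta>*(p*q - p^2) + 4*\<eta>^2*p^2*(norm x)^2"
    by (simp add: p_def q_def inner_diff_left power2_eq_square algebra_simps)
  also have "4*\<eta>^2*p^2*(norm x)^2 \<le> 4*\<eta>^2*p^2*C^2"
    using assms by (intro mult_left_mono power_mono) auto
  also have "4*\<eta>*(p*q - p^2) \<le> 2*\<eta>*(q^2 - p^2)"
  proof -
    have "p*q - p^2 \<le> (q^2 - p^2)/2"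
      using zero_le_power2[of "q - p"] by (simp add: power2_diff algebra_simps)
    then show ?thesis using assms(1) by simp
  qed
  finally show ?thesis by (simp add: p_def q_def power2_eq_square algebra_simps)
qed

lemma sum_le_telescoping:
  fixes \<Phi> p q :: "nat \<Rightarrow> real"
  assumes "\<And>i. 1 \<le> i \<Longrightarrow> i \<le> n \<Longrightarrow> \<Phi> (Suc i) + p i \<le> \<Phi> i + q i"
  shows "(\<Sum>i=1..n. p i) + \<Phi> (Suc n) \<le> \<Phi> 1 + (\<Sum>i=1..n. q i)"
proof -
  have "(\<Sum>i=1..n. p i) \<le> (\<Sum>i=1..n. q i - (\<Phi> (Suc i) - \<Phi> i))"
    using assms by (intro sum_mono) fastforce
  also have "\<dots> = (\<Sum>i=1..n. q i) - (\<Phi> (Suc n) - \<Phi> 1)"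
    using sum_Suc_diff[of 1 n \<Phi>] by (simp add: sum_subtractf)
  finally show ?thesis by simp
qed

lemma truncated_gradient_cumulative_bound:
  fixes \<theta> :: ereal and \<eta> C :: real
    and g :: "nat \<Rightarrow> real"
    and x :: "nat \<Rightarrow> real ^ 'd" and y :: "nat \<Rightarrow> real"
    and v w :: "nat \<Rightarrow> real ^ 'd"
    and wbar :: "real ^ 'd"
  assumes eta: "0 < \<eta>"
    and grav: "\<And>i. i \<ge> 1 \<Longrightarrow> g i \<ge> 0"
    and xbound: "\<And>i. i \<ge> 1 \<Longrightarrow> norm (x i) \<le> C"
    and v1: "v 1 = 0"
    and wdef: "\<And>i. i \<ge> 1 \<Longrightarrow> w i = T1_vec (v i) (g i * \<eta>) \<theta>"
    and vstep: "\<And>i. i \<ge> 1 \<Longrightarrow> v (i + 1) = w i + (2 * \<eta> * (y i - w i \<bullet> x i)) *\<^sub>R x i"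
  shows "2*\<eta> * (\<Sum>i=1..T. (1 - 2*C^2*\<eta>) * (w i \<bullet> x i - y i)^2 + g i * masked_l1 (w i) (w i) \<theta>)
    \<le> (norm wbar)^2
      + 2*\<eta> * (\<Sum>i=1..T. (wbar \<bullet> x i - y i)^2 + g (i + 1) * masked_l1 wbar (w (i + 1)) \<theta>)"
proof -
  define \<Phi> where "\<Phi> i = (norm (wbar - w i))^2 + 2*\<eta> * g i * masked_l1 (w i) (w i) \<theta>" for i
  have step: "\<Phi> (Suc i) + 2*\<eta> * ((1 - 2*C^2*\<eta>) * (w i \<bullet> x i - y i)^2 + g i * masked_l1 (w i) (w i) \<theta>)
      \<le> \<Phi> i + 2*\<eta> * ((wbar \<bullet> x i - y i)^2 + g (Suc i) * masked_l1 wbar (w (Suc i)) \<theta>)"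
    if i: "1 \<le> i" for i
  proof -
    have a: "0 \<le> g (Suc i) * \<eta>" using grav[of "Suc i"] eta by simp
    have "\<Phi> (Suc i) \<le> (norm (wbar - v (Suc i)))^2 + 2*\<eta> * g (Suc i) * masked_l1 wbar (w (Suc i)) \<theta>"
      using T1_vec_prox_ineq[OF a, of wbar "v (Suc i)" \<theta>] wdef[of "Suc i"]
      by (simp add: \<Phi>_def mult_ac)
    also have "(norm (wbar - v (Suc i)))^2 \<le> (norm (wbar - w i))^2
        - 2*\<eta>*(1 - 2*C^2*\<eta>)*(w i \<bullet> x i - y i)^2 + 2*\<eta>*(wbar \<bullet> x i - y i)^2"
      using vstep[OF i] lms_step_dist_ineq[OF eta xbound[OF i]] by simp
    finally show ?thesis by (simp add: \<Phi>_def algebra_simps)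
  qed
  have "w 1 = 0"
    using wdef[of 1] v1 grav[of 1] eta by (simp add: T1_vec_zero)
  then have "\<Phi> 1 = (norm wbar)^2" by (simp add: \<Phi>_def)
  moreover have "0 \<le> \<Phi> (Suc T)"
    using grav[of "Suc T"] eta by (simp add: \<Phi>_def masked_l1_nonneg)
  ultimately show ?thesis
    using sum_le_telescoping[of T \<Phi>, OF step] by (simp add: sum_distrib_left)
qed

theorem corollary1:
  fixes \<theta> :: ereal and \<eta> C :: real
    and g :: "nat \<Rightarrow> real"
    and x :: "nat \<Rightarrow> real ^ 'd" and y :: "nat \<Rightarrow> real"
    and v w :: "nat \<Rightarrow> real ^ 'd"
    and T :: nat and wbar :: "real ^ 'd"
  assumes theta: "0 \<le> \<theta>"
    and eta: "0 < \<eta>" "\<eta> < 1"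
    and grav: "\<And>i. i \<ge> 1 \<Longrightarrow> g i \<ge> 0"
    and Cpos: "C > 0"
    and xbound: "\<And>i. i \<ge> 1 \<Longrightarrow> norm (x i) \<le> C"
    and Cne: "1 - 2 * C^2 * \<eta> \<noteq> 0"
    and v1: "v 1 = 0"
    and wdef: "\<And>i. i \<ge> 1 \<Longrightarrow> w i = T1_vec (v i) (g i * \<eta>) \<theta>"
    and vstep: "\<And>i. i \<ge> 1 \<Longrightarrow> v (i + 1) = w i + (2 * \<eta> * (y i - w i \<bullet> x i)) *\<^sub>R x i"
    and T: "T \<ge> 1"
  shows "(1 - 2 * C^2 * \<eta>) / real T *
           (\<Sum>i=1..T. (w i \<bullet> x i - y i)^2
              + g i / (1 - 2 * C^2 * \<eta>) * masked_l1 (w i) (w i) \<theta>)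
         \<le> (norm wbar)^2 / (2 * \<eta> * real T)
           + 1 / real T * (\<Sum>i=1..T. (wbar \<bullet> x i - y i)^2
              + g (i + 1) * masked_l1 wbar (w (i + 1)) \<theta>)"
proof -
  define K where "K = 1 - 2 * C^2 * \<eta>"
  let ?L = "\<Sum>i=1..T. K * (w i \<bullet> x i - y i)^2 + g i * masked_l1 (w i) (w i) \<theta>"
  let ?R = "\<Sum>i=1..T. (wbar \<bullet> x i - y i)^2 + g (i + 1) * masked_l1 wbar (w (i + 1)) \<theta>"
  have "K * (\<Sum>i=1..T. (w i \<bullet> x i - y i)^2 + g i / K * masked_l1 (w i) (w i) \<theta>) = ?L"
    using Cne by (simp add: K_def sum_distrib_left distrib_left)
  then have "K / real T * (\<Sum>i=1..T. (w i \<bullet> x i - y i)^2 + g i / K * masked_l1 (w i) (w i) \<theta>)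
      = ?L / real T"
    by simp
  also have "\<dots> \<le> ((norm wbar)^2 / (2*\<eta>) + ?R) / real T"
    using truncated_gradient_cumulative_bound[OF eta(1) grav xbound v1 wdef vstep, of T wbar] eta(1)
    by (intro divide_right_mono) (simp_all add: K_def field_simps)
  also have "\<dots> = (norm wbar)^2 / (2 * \<eta> * real T) + 1 / real T * ?R"
    by (simp add: add_divide_distrib)
  finally show ?thesis unfolding K_def .
qed

end
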